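(* Let $m,n,k,a$ be natural numbers with $n\geq 1$, $k\geq 1$, $m\geq 1$ and $1\leq a\leq 9$. Then the equation $$C_nC_{n+1}\cdots C_{n+k} = a\left(\frac{10^m-1}{9}\right)$$ has no solution. That is, no product of two or more consecutive Lucas-balancing numbers (starting from index at least $1$) is a decimal repdigit.
   Context: The Lucas-balancing sequence $(C_n)_{n\geq 0}$ is defined by $C_0=1$, $C_1=3$ and $C_{n+1}=6C_n-C_{n-1}$ for $n\geq 1$. For $1\le a\le 9$ and $m\ge 1$, the number $a\frac{10^m-1}{9}$ is the decimal integer consisting of $m$ copies of the digit $a$. *)

theory Defs
  imports Main
begin

text \<open>The sequence is increasing and positive, so computing in nat is exact
  (6 C(n+1) \<ge> C n); we nevertheless define it over int to avoid truncation.\<close>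
fun lucas_bal :: "nat \<Rightarrow> int" where
  "lucas_bal 0 = 1"
| "lucas_bal (Suc 0) = 3"
| "lucas_bal (Suc (Suc n)) = 6 * lucas_bal (Suc n) - lucas_bal n"

end

theory Submission
  imports Defs
begin

text \<open>Every Lucas-balancing number is congruent to 1 or 3 modulo 8 and is prime to 5 and 7,
  and these residue sets are closed under multiplication, so the same holds for any product P of
  them. A repdigit with m \<ge> 3 digits is \<open>a\<close> times a repunit \<equiv> 7 (mod 8); the congruence
  \<open>7a \<equiv> 1, 3 (mod 8)\<close> forces \<open>a \<in> {5, 7}\<close>, contradicting the coprimality. Shorter repdigits
  are excluded by size: P \<ge> C(1) C(2) = 51 together with the residues leaves only 99,
  which is neither divisible by C(2) = 17 nor as large as C(2) C(3).\<close>

lemma lucas_bal_pos_and_growth: "0 < lucas_bal n \<and> 3 * lucas_bal n \<le> lucas_bal (Suc n)"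
  by (induction n) auto

lemma lucas_bal_pos: "0 < lucas_bal n"
  using lucas_bal_pos_and_growth by blast

lemma mono_lucas_bal: "mono lucas_bal"
proof -
  have "lucas_bal n \<le> lucas_bal (Suc n)" for n
    using lucas_bal_pos_and_growth[of n] by linarith
  then show ?thesis by (simp add: mono_iff_le_Suc)
qed

lemma lucas_bal_1: "lucas_bal 1 = 3"
  and lucas_bal_2: "lucas_bal 2 = 17"
  and lucas_bal_3: "lucas_bal 3 = 99"
  by (simp_all add: eval_nat_numeral)

lemma lucas_bal_mod_invariant:
  assumes "(1 mod M, 3 mod M) \<in> S"
    and "\<And>x y. (x, y) \<in> S \<Longrightarrow> (y, (6 * y - x) mod M) \<in> S"
  shows "(lucas_bal n mod M, lucas_bal (Suc n) mod M) \<in> S"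
proof (induction n)
  case 0
  then show ?case using assms(1) by simp
next
  case (Suc n)
  have "lucas_bal (Suc (Suc n)) mod M = (6 * (lucas_bal (Suc n) mod M) - lucas_bal n mod M) mod M"
    by (simp only: lucas_bal.simps(3)) (metis mod_diff_eq mod_diff_left_eq mod_mult_right_eq)
  then show ?case using assms(2)[OF Suc] by simp
qed

lemma lucas_bal_mod_8: "lucas_bal n mod 8 \<in> {1, 3}"
proof -
  have "(lucas_bal n mod 8, lucas_bal (Suc n) mod 8) \<in> {(1, 3), (3, 1)}"
    by (rule lucas_bal_mod_invariant) auto
  then show ?thesis by auto
qed

lemma lucas_bal_mod_5: "lucas_bal n mod 5 \<in> {1, 2, 3, 4}"
proof -
  have "(lucas_bal n mod 5, lucas_bal (Suc n) mod 5)
      \<in> {(1, 3), (3, 2), (2, 4), (4, 2), (2, 3), (3, 1)}"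
    by (rule lucas_bal_mod_invariant) auto
  then show ?thesis by auto
qed

lemma lucas_bal_mod_7: "lucas_bal n mod 7 \<in> {1, 3}"
proof -
  have "(lucas_bal n mod 7, lucas_bal (Suc n) mod 7) \<in> {(1, 3), (3, 3), (3, 1)}"
    by (rule lucas_bal_mod_invariant) auto
  then show ?thesis by auto
qed

lemma prod_mod_in_mult_closed:
  fixes f :: "'a \<Rightarrow> 'b :: euclidean_semiring_cancel"
  assumes "finite A" and "1 mod M \<in> T" and "\<And>i. f i mod M \<in> T"
    and "\<And>x y. x \<in> T \<Longrightarrow> y \<in> T \<Longrightarrow> (x * y) mod M \<in> T"
  shows "prod f A mod M \<in> T"
  using assms(1)
proof (induction A rule: finite_induct)
  case empty
  then show ?case using assms(2) by simp
next
  case (insert x F)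
  then have "prod f (insert x F) mod M = (f x mod M * (prod f F mod M)) mod M"
    by (simp add: mod_mult_eq)
  then show ?case using insert assms(3,4) by simp
qed

definition lucas_bal_residues :: "int \<Rightarrow> bool" where
  "lucas_bal_residues x \<longleftrightarrow> x mod 8 \<in> {1, 3} \<and> \<not> 5 dvd x \<and> \<not> 7 dvd x"

lemma lucas_bal_residues_prod:
  assumes "finite A"
  shows "lucas_bal_residues (\<Prod>i\<in>A. lucas_bal i)"
proof -
  have "(\<Prod>i\<in>A. lucas_bal i) mod 8 \<in> {1, 3}"
    by (rule prod_mod_in_mult_closed) (use assms lucas_bal_mod_8 in auto)
  moreover have "(\<Prod>i\<in>A. lucas_bal i) mod 5 \<in> {1, 2, 3, 4}"
    by (rule prod_mod_in_mult_closed) (use assms lucas_bal_mod_5 in auto)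
  moreover have "(\<Prod>i\<in>A. lucas_bal i) mod 7 \<in> {1, 2, 3, 4, 5, 6}"
    by (rule prod_mod_in_mult_closed) (use assms lucas_bal_mod_7 in auto)
  ultimately show ?thesis
    unfolding lucas_bal_residues_def dvd_eq_mod_eq_0 by (intro conjI) auto
qed

lemma lucas_bal_consecutive_prod_ge:
  assumes "k \<ge> 1" and "i \<le> n"
  shows "lucas_bal i * lucas_bal (Suc i) \<le> (\<Prod>j=n..n+k. lucas_bal j)"
proof -
  define Q where "Q = (\<Prod>j=Suc (Suc n)..n+k. lucas_bal j)"
  have split: "(\<Prod>j=n..n+k. lucas_bal j) = lucas_bal n * lucas_bal (Suc n) * Q"
    using assms(1) by (simp add: Q_def prod.atLeast_Suc_atMost)
  have "1 \<le> Q"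
    unfolding Q_def by (rule prod_ge_1) (simp add: int_one_le_iff_zero_less lucas_bal_pos)
  have "lucas_bal i \<le> lucas_bal n" "lucas_bal (Suc i) \<le> lucas_bal (Suc n)"
    using assms(2) mono_lucas_bal by (simp_all add: monoD)
  then have "lucas_bal i * lucas_bal (Suc i) \<le> lucas_bal n * lucas_bal (Suc n)"
    using lucas_bal_pos[of n] lucas_bal_pos[of "Suc i"] by (intro mult_mono) simp_all
  also have "\<dots> \<le> lucas_bal n * lucas_bal (Suc n) * Q"
    using mult_left_mono[OF \<open>1 \<le> Q\<close>, of "lucas_bal n * lucas_bal (Suc n)"] lucas_bal_pos
    by (simp add: less_imp_le)
  finally show ?thesis
    unfolding split .
qed

lemma lucas_bal_consecutive_prod_ne_99:
  assumes "n \<ge> 1" and "k \<ge> 1"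
  shows "(\<Prod>i=n..n+k. lucas_bal i) \<noteq> 99"
proof (cases "n = 1")
  case True
  then have "lucas_bal 2 dvd (\<Prod>i=n..n+k. lucas_bal i)"
    using assms(2) by (intro dvd_prodI) auto
  then show ?thesis by (auto simp: lucas_bal_2)
next
  case False
  then have "lucas_bal 2 * lucas_bal 3 \<le> (\<Prod>i=n..n+k. lucas_bal i)"
    using assms lucas_bal_consecutive_prod_ge[of k 2 n] by simp
  then show ?thesis by (simp add: lucas_bal_2 lucas_bal_3)
qed

lemma repunit_mod_8:
  assumes "m \<ge> 3"
  shows "((10 :: int) ^ m - 1) div 9 mod 8 = 7"
proof -
  define q :: int where "q = 10 ^ (m - 3) div 9"
  have "(10 :: int) ^ (m - 3) mod 9 = 1"
    using power_mod[of "10 :: int" 9 "m - 3"] by simp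
  then have q: "(10 :: int) ^ (m - 3) = 9 * q + 1"
    unfolding q_def using div_mult_mod_eq[of "(10 :: int) ^ (m - 3)" 9] by linarith
  have "(10 :: int) ^ m = 10 ^ (m - 3) * 10 ^ 3"
    using power_add[of "10 :: int" "m - 3" 3] assms by simp
  then have "(10 :: int) ^ m - 1 = 9 * (7 + (13 + 125 * q) * 8)"
    using q by simp
  then have "((10 :: int) ^ m - 1) div 9 = 7 + (13 + 125 * q) * 8"
    by simp
  then show ?thesis
    by (simp only: mod_mult_self1) simp
qed

lemma not_lucas_bal_residues_long_repdigit:
  assumes "m \<ge> 3" and "a \<le> 9"
  shows "\<not> lucas_bal_residues (int a * ((10 ^ m - 1) div 9))"
proof
  define P where "P = int a * ((10 ^ m - 1) div 9)"
  assume "lucas_bal_residues (int a * ((10 ^ m - 1) div 9))"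
  then have residues: "P mod 8 \<in> {1, 3}" "\<not> 5 dvd P" "\<not> 7 dvd P"
    unfolding lucas_bal_residues_def P_def by simp_all
  have "P mod 8 = int a * 7 mod 8"
    unfolding P_def using repunit_mod_8[OF assms(1)] by (metis mod_mult_right_eq)
  moreover have "a \<in> {0, 1, 2, 3, 4, 5, 6, 7, 8, 9}"
    using assms(2) by auto
  ultimately have "a = 5 \<or> a = 7"
    using residues(1) by (elim insertE) simp_all
  then show False
    using residues(2,3) by (auto simp: P_def)
qed

lemma lucas_bal_residues_two_digit_repdigit:
  assumes "a \<le> 9" and "51 \<le> 11 * int a" and "lucas_bal_residues (11 * int a)"
  shows "a = 9"
proof -
  have "a \<in> {5, 6, 7, 8, 9}"
    using assms(1,2) by auto
  then show ?thesis
    using assms(3) unfolding lucas_bal_residues_def by (elim insertE) simp_all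
qed

theorem theorem4:
  fixes m n k a :: nat
  assumes "n \<ge> 1" and "k \<ge> 1" and "m \<ge> 1" and "1 \<le> a" and "a \<le> 9"
  shows "(\<Prod>i=n..n+k. lucas_bal i) \<noteq> int a * ((10 ^ m - 1) div 9)"
proof
  define P where "P = (\<Prod>i=n..n+k. lucas_bal i)"
  assume "(\<Prod>i=n..n+k. lucas_bal i) = int a * ((10 ^ m - 1) div 9)"
  then have P_eq: "P = int a * ((10 ^ m - 1) div 9)"
    by (simp add: P_def)
  have residues: "lucas_bal_residues P"
    unfolding P_def by (rule lucas_bal_residues_prod) simp
  have P_ge: "51 \<le> P"
    unfolding P_def using assms(1,2) lucas_bal_consecutive_prod_ge[of k 1 n]
    by (simp add: lucas_bal_1 lucas_bal_2)
  consider "m = 1" | "m = 2" | "m \<ge> 3"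
    using assms(3) by linarith
  then show False
  proof cases
    case 1
    then show False using P_eq P_ge assms(5) by simp
  next
    case 2
    then have "P = 11 * int a" using P_eq by simp
    then have "P = 99"
      using lucas_bal_residues_two_digit_repdigit[OF assms(5)] residues P_ge by simp
    then show False
      using lucas_bal_consecutive_prod_ne_99[OF assms(1,2)] by (simp add: P_def)
  next
    case 3
    then show False
      using not_lucas_bal_residues_long_repdigit[OF _ assms(5)] residues P_eq by simp
  qed
qed

end
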